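(* Let $m,k\in\mathbb{Z}$, let $(H,\alpha)$ be a monoidal Hom-bialgebra and $(C,\beta)$ a monoidal Hom-algebra which is a left weak $(H,\alpha)$-Hom-module algebra via $h\otimes c\mapsto h\rightarrow c$ and a left $(H,\alpha)$-Hom-comodule coalgebra with coaction $c\mapsto c_{(-1)}\otimes c_{(0)}$; let $\sigma:H\otimes H\to C$ be a convolution invertible linear map. Let $X=C\otimes H$ with multiplication $(a\otimes h)(b\otimes g)=a[(\alpha^{m}(h_{11})\rightarrow\beta^{-2}(b))\sigma(\alpha^{k+1}(h_{12}),\alpha^{k}(g_{1}))]\otimes\alpha(h_{2}g_{2})$, unit $1_C\otimes1_H$, comultiplication $\Delta(a\otimes h)=a_{1}\otimes\alpha^{m}(a_{2(-1)})\alpha^{-1}(h_{1})\otimes\beta(a_{2(0)})\otimes h_{2}$, counit $\varepsilon(a)\varepsilon(h)$ and structure map $\xi=\beta\otimes\alpha$, and assume $(X,\xi)$ is a monoidal Hom-bialgebra. Define $\varphi^r:X\otimes H\to X$ by $$\varphi^{r}((a\otimes h)\otimes l)=a\,\sigma(\alpha^{k+1}(h_{1}),\alpha^{k+1-m}(l_{1}))\otimes\alpha(h_{2})\alpha^{1-m}(l_{2}),$$ and $\bar\sigma:H\otimes H\to X$ by $\bar\sigma(h\otimes l)=\sigma(\alpha^{k+1-m}(h),\alpha^{k+1-m}(l))\otimes1_H$. Then $(X,\xi,\varphi^r)$ is a right $(H,\alpha,\bar\sigma)$-Hom module, i.e. for all $l,g\in H$ and $x\in X$, $$\varphi^r(\varphi^r(x\otimes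 l)\otimes\alpha(g))=\xi(x)\,\varphi^r(\bar\sigma(l_1,g_1)\otimes l_2g_2)\quad\text{and}\quad\varphi^r(x\otimes1_H)=\xi(x),$$ where juxtaposition is the multiplication of $X$.
   Context: Field $k$; Sweedler notation. Monoidal Hom-algebra $(A,\beta)$: $\beta(a)(bc)=(ab)\beta(c)$, $\beta(ab)=\beta(a)\beta(b)$, $a1=1a=\beta(a)$, $\beta(1)=1$, $\beta$ a linear automorphism. Monoidal Hom-coalgebra $(C,\gamma)$: $\gamma^{-1}(c_1)\otimes\Delta(c_2)=\Delta(c_1)\otimes\gamma^{-1}(c_2)$, $\Delta\gamma=(\gamma\otimes\gamma)\Delta$, $c_1\varepsilon(c_2)=\gamma^{-1}(c)=\varepsilon(c_1)c_2$, $\varepsilon\gamma=\varepsilon$. Monoidal Hom-bialgebra: both with the same structure map and $\Delta,\varepsilon$ multiplicative and unital. Left weak $(H,\alpha)$-Hom-module algebra: $h\rightarrow(ab)=(h_1\rightarrow a)(h_2\rightarrow b)$, $h\rightarrow1=\varepsilon(h)1$. Left $(H,\alpha)$-Hom-comodule $(M,\mu)$: $\Delta_H(x_{(-1)})\otimes\mu^{-1}(x_{(0)})=\alpha^{-1}(x_{(-1)})\otimes x_{(0)(-1)}\otimes x_{(0)(0)}$, $\rho(\mu(x))=\alpha(x_{(-1)})\otimes\mu(x_{(0)})$, $\varepsilon(x_{(-1)})x_{(0)}=\mu^{-1}(x)$; Hom-comodule coalgebra: moreover $b_{(-1)}\otimes b_{(0)1}\otimes b_{(0)2}=b_{1(-1)}b_{2(-1)}\otimes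 b_{1(0)}\otimes b_{2(0)}$, $\varepsilon(b_{(0)})b_{(-1)}=\varepsilon(b)1_H$. $\sigma$ convolution invertible means there is a linear $\sigma^{-1}:H\otimes H\to C$ with $\sigma(h_1,l_1)\sigma^{-1}(h_2,l_2)=\varepsilon(h)\varepsilon(l)1_C=\sigma^{-1}(h_1,l_1)\sigma(h_2,l_2)$. *)

theory Defs
  imports Complex_Main
begin

text \<open>An element of a tensor product V1 (x) ... (x) Vn of k-vector spaces is represented by a
finite list of (nested) tuples, standing for the sum of the corresponding pure tensors.
Two such representations denote the same tensor iff they agree under all products of linear
functionals f1(v1)*...*fn(vn) (products of linear functionals separate the points of a
tensor product of vector spaces).\<close>

definition lins :: "('k::field \<Rightarrow> 'a::ab_group_add \<Rightarrow> 'a) \<Rightarrow> ('a \<Rightarrow> 'k) set" where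
  "lins s = {f. Vector_Spaces.linear s ((*) :: 'k \<Rightarrow> 'k \<Rightarrow> 'k) f}"

definition tprod :: "('a \<Rightarrow> 'k::times) set \<Rightarrow> ('b \<Rightarrow> 'k) set \<Rightarrow> ('a \<times> 'b \<Rightarrow> 'k) set" where
  "tprod A B = {(\<lambda>(x, y). F x * G y) | F G. F \<in> A \<and> G \<in> B}"

definition teq :: "('a \<Rightarrow> 'k::monoid_add) set \<Rightarrow> 'a list \<Rightarrow> 'a list \<Rightarrow> bool" where
  "teq T xs ys \<longleftrightarrow> (\<forall>F\<in>T. sum_list (map F xs) = sum_list (map F ys))"

definition zpow :: "('a \<Rightarrow> 'a) \<Rightarrow> int \<Rightarrow> 'a \<Rightarrow> 'a" where
  "zpow f n = (if 0 \<le> n then f ^^ nat n else inv f ^^ nat (- n))"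

definition bilin :: "('k::field \<Rightarrow> 'a::ab_group_add \<Rightarrow> 'a) \<Rightarrow> ('k \<Rightarrow> 'b::ab_group_add \<Rightarrow> 'b)
    \<Rightarrow> ('k \<Rightarrow> 'c::ab_group_add \<Rightarrow> 'c) \<Rightarrow> ('a \<Rightarrow> 'b \<Rightarrow> 'c) \<Rightarrow> bool" where
  "bilin sa sb sc f \<longleftrightarrow> (\<forall>y. Vector_Spaces.linear sa sc (\<lambda>x. f x y)) \<and> (\<forall>x. Vector_Spaces.linear sb sc (f x))"

definition hom_algebra :: "('k::field \<Rightarrow> 'a::ab_group_add \<Rightarrow> 'a) \<Rightarrow> ('a \<Rightarrow> 'a \<Rightarrow> 'a) \<Rightarrow> 'a
    \<Rightarrow> ('a \<Rightarrow> 'a) \<Rightarrow> bool" where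
  "hom_algebra s mu u b \<longleftrightarrow>
     Vector_Spaces.vector_space s \<and> bilin s s s mu \<and> Vector_Spaces.linear s s b \<and> bij b \<and>
     (\<forall>x y z. mu (b x) (mu y z) = mu (mu x y) (b z)) \<and>
     (\<forall>x y. b (mu x y) = mu (b x) (b y)) \<and>
     (\<forall>x. mu x u = b x \<and> mu u x = b x) \<and> b u = u"

definition hom_coalgebra :: "('k::field \<Rightarrow> 'a::ab_group_add \<Rightarrow> 'a) \<Rightarrow> ('a \<Rightarrow> ('a \<times> 'a) list)
    \<Rightarrow> ('a \<Rightarrow> 'k) \<Rightarrow> ('a \<Rightarrow> 'a) \<Rightarrow> bool" where
  "hom_coalgebra s D e g \<longleftrightarrow>
     Vector_Spaces.vector_space s \<and> Vector_Spaces.linear s s g \<and> bij g \<and> e \<in> lins s \<and>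
     (\<forall>x y. teq (tprod (lins s) (lins s)) (D (x + y)) (D x @ D y)) \<and>
     (\<forall>c x. teq (tprod (lins s) (lins s)) (D (s c x)) (map (\<lambda>(p, q). (s c p, q)) (D x))) \<and>
     (\<forall>x. teq (tprod (lins s) (tprod (lins s) (lins s)))
            [(inv g p, q, r). (p, y) \<leftarrow> D x, (q, r) \<leftarrow> D y]
            [(p, q, inv g y). (z, y) \<leftarrow> D x, (p, q) \<leftarrow> D z]) \<and>
     (\<forall>x. teq (tprod (lins s) (lins s)) (D (g x)) (map (\<lambda>(p, q). (g p, g q)) (D x))) \<and>
     (\<forall>x. sum_list [s (e q) p. (p, q) \<leftarrow> D x] = inv g x \<and>
          sum_list [s (e p) q. (p, q) \<leftarrow> D x] = inv g x) \<and>
     (\<forall>x. e (g x) = e x)"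

definition hom_bialgebra :: "('k::field \<Rightarrow> 'a::ab_group_add \<Rightarrow> 'a) \<Rightarrow> ('a \<Rightarrow> 'a \<Rightarrow> 'a) \<Rightarrow> 'a
    \<Rightarrow> ('a \<Rightarrow> ('a \<times> 'a) list) \<Rightarrow> ('a \<Rightarrow> 'k) \<Rightarrow> ('a \<Rightarrow> 'a) \<Rightarrow> bool" where
  "hom_bialgebra s mu u D e a \<longleftrightarrow>
     hom_algebra s mu u a \<and> hom_coalgebra s D e a \<and>
     (\<forall>x y. teq (tprod (lins s) (lins s)) (D (mu x y))
              [(mu p p', mu q q'). (p, q) \<leftarrow> D x, (p', q') \<leftarrow> D y]) \<and>
     teq (tprod (lins s) (lins s)) (D u) [(u, u)] \<and>
     (\<forall>x y. e (mu x y) = e x * e y) \<and> e u = 1"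

definition weak_hom_module_algebra :: "('k::field \<Rightarrow> 'h::ab_group_add \<Rightarrow> 'h) \<Rightarrow> ('h \<Rightarrow> ('h \<times> 'h) list)
    \<Rightarrow> ('h \<Rightarrow> 'k) \<Rightarrow> ('k \<Rightarrow> 'c::ab_group_add \<Rightarrow> 'c) \<Rightarrow> ('c \<Rightarrow> 'c \<Rightarrow> 'c) \<Rightarrow> 'c
    \<Rightarrow> ('h \<Rightarrow> 'c \<Rightarrow> 'c) \<Rightarrow> bool" where
  "weak_hom_module_algebra sH DH eH sC mC uC act \<longleftrightarrow>
     bilin sH sC sC act \<and>
     (\<forall>h a b. act h (mC a b) = sum_list [mC (act p a) (act q b). (p, q) \<leftarrow> DH h]) \<and>
     (\<forall>h. act h uC = sC (eH h) uC)"

definition hom_comodule :: "('k::field \<Rightarrow> 'h::ab_group_add \<Rightarrow> 'h) \<Rightarrow> ('h \<Rightarrow> ('h \<times> 'h) list)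
    \<Rightarrow> ('h \<Rightarrow> 'k) \<Rightarrow> ('h \<Rightarrow> 'h) \<Rightarrow> ('k \<Rightarrow> 'm::ab_group_add \<Rightarrow> 'm) \<Rightarrow> ('m \<Rightarrow> 'm)
    \<Rightarrow> ('m \<Rightarrow> ('h \<times> 'm) list) \<Rightarrow> bool" where
  "hom_comodule sH DH eH al sM mu rho \<longleftrightarrow>
     Vector_Spaces.vector_space sM \<and> Vector_Spaces.linear sM sM mu \<and> bij mu \<and>
     (\<forall>x y. teq (tprod (lins sH) (lins sM)) (rho (x + y)) (rho x @ rho y)) \<and>
     (\<forall>c x. teq (tprod (lins sH) (lins sM)) (rho (sM c x)) (map (\<lambda>(h, y). (h, sM c y)) (rho x))) \<and>
     (\<forall>x. teq (tprod (lins sH) (tprod (lins sH) (lins sM)))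
            [(p, q, inv mu y). (h, y) \<leftarrow> rho x, (p, q) \<leftarrow> DH h]
            [(inv al h, p, z). (h, y) \<leftarrow> rho x, (p, z) \<leftarrow> rho y]) \<and>
     (\<forall>x. teq (tprod (lins sH) (lins sM)) (rho (mu x)) (map (\<lambda>(h, y). (al h, mu y)) (rho x))) \<and>
     (\<forall>x. sum_list [sM (eH h) y. (h, y) \<leftarrow> rho x] = inv mu x)"

definition hom_comodule_coalgebra :: "('k::field \<Rightarrow> 'h::ab_group_add \<Rightarrow> 'h) \<Rightarrow> ('h \<Rightarrow> 'h \<Rightarrow> 'h) \<Rightarrow> 'h
    \<Rightarrow> ('h \<Rightarrow> ('h \<times> 'h) list) \<Rightarrow> ('h \<Rightarrow> 'k) \<Rightarrow> ('h \<Rightarrow> 'h)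
    \<Rightarrow> ('k \<Rightarrow> 'c::ab_group_add \<Rightarrow> 'c) \<Rightarrow> ('c \<Rightarrow> ('c \<times> 'c) list) \<Rightarrow> ('c \<Rightarrow> 'k) \<Rightarrow> ('c \<Rightarrow> 'c)
    \<Rightarrow> ('c \<Rightarrow> ('h \<times> 'c) list) \<Rightarrow> bool" where
  "hom_comodule_coalgebra sH mH uH DH eH al sC DC eC be rho \<longleftrightarrow>
     hom_coalgebra sC DC eC be \<and> hom_comodule sH DH eH al sC be rho \<and>
     (\<forall>b. teq (tprod (lins sH) (tprod (lins sC) (lins sC)))
            [(h, p, q). (h, y) \<leftarrow> rho b, (p, q) \<leftarrow> DC y]
            [(mH h h', y, y'). (b1, b2) \<leftarrow> DC b, (h, y) \<leftarrow> rho b1, (h', y') \<leftarrow> rho b2]) \<and>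
     (\<forall>b. sum_list [sH (eC y) h. (h, y) \<leftarrow> rho b] = sH (eC b) uH)"

definition conv_inverse :: "('h \<Rightarrow> ('h \<times> 'h) list) \<Rightarrow> ('h \<Rightarrow> 'k::field)
    \<Rightarrow> ('k \<Rightarrow> 'c::ab_group_add \<Rightarrow> 'c) \<Rightarrow> ('c \<Rightarrow> 'c \<Rightarrow> 'c) \<Rightarrow> 'c
    \<Rightarrow> ('h \<Rightarrow> 'h \<Rightarrow> 'c) \<Rightarrow> ('h \<Rightarrow> 'h \<Rightarrow> 'c) \<Rightarrow> bool" where
  "conv_inverse DH eH sC mC uC sg sgi \<longleftrightarrow>
     (\<forall>h l. sum_list [mC (sg h1 l1) (sgi h2 l2). (h1, h2) \<leftarrow> DH h, (l1, l2) \<leftarrow> DH l]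
              = sC (eH h * eH l) uC \<and>
            sum_list [mC (sgi h1 l1) (sg h2 l2). (h1, h2) \<leftarrow> DH h, (l1, l2) \<leftarrow> DH l]
              = sC (eH h * eH l) uC)"

text \<open>Elements of X = C (x) H are lists of pairs (a, h), standing for sum of a (x) h.
Elements of X (x) X are lists of pairs of pure tensors.\<close>

definition multX :: "('h \<Rightarrow> 'h \<Rightarrow> 'h) \<Rightarrow> ('h \<Rightarrow> ('h \<times> 'h) list) \<Rightarrow> ('h \<Rightarrow> 'h)
    \<Rightarrow> ('c \<Rightarrow> 'c \<Rightarrow> 'c) \<Rightarrow> ('c \<Rightarrow> 'c) \<Rightarrow> ('h \<Rightarrow> 'c \<Rightarrow> 'c) \<Rightarrow> ('h \<Rightarrow> 'h \<Rightarrow> 'c)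
    \<Rightarrow> int \<Rightarrow> int \<Rightarrow> ('c \<times> 'h) list \<Rightarrow> ('c \<times> 'h) list \<Rightarrow> ('c \<times> 'h) list" where
  "multX mH DH al mC be act sg m k x y =
     [(mC a (mC (act (zpow al m h11) (zpow be (-2) b)) (sg (zpow al (k + 1) h12) (zpow al k g1))),
       al (mH h2 g2)).
       (a, h) \<leftarrow> x, (b, g) \<leftarrow> y, (h1, h2) \<leftarrow> DH h, (h11, h12) \<leftarrow> DH h1, (g1, g2) \<leftarrow> DH g]"

definition copX :: "('h \<Rightarrow> 'h \<Rightarrow> 'h) \<Rightarrow> ('h \<Rightarrow> ('h \<times> 'h) list) \<Rightarrow> ('h \<Rightarrow> 'h)
    \<Rightarrow> ('c \<Rightarrow> ('c \<times> 'c) list) \<Rightarrow> ('c \<Rightarrow> 'c) \<Rightarrow> ('c \<Rightarrow> ('h \<times> 'c) list) \<Rightarrow> int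
    \<Rightarrow> ('c \<times> 'h) list \<Rightarrow> (('c \<times> 'h) \<times> ('c \<times> 'h)) list" where
  "copX mH DH al DC be rho m x =
     [((a1, mH (zpow al m hm) (zpow al (-1) h1)), (be a20, h2)).
       (a, h) \<leftarrow> x, (a1, a2) \<leftarrow> DC a, (hm, a20) \<leftarrow> rho a2, (h1, h2) \<leftarrow> DH h]"

definition counitX :: "('c \<Rightarrow> 'k::comm_semiring_1) \<Rightarrow> ('h \<Rightarrow> 'k) \<Rightarrow> ('c \<times> 'h) list \<Rightarrow> 'k" where
  "counitX eC eH x = sum_list [eC a * eH h. (a, h) \<leftarrow> x]"

definition xi1 :: "('c \<Rightarrow> 'c) \<Rightarrow> ('h \<Rightarrow> 'h) \<Rightarrow> 'c \<times> 'h \<Rightarrow> 'c \<times> 'h" where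
  "xi1 be al = (\<lambda>(a, h). (be a, al h))"

definition xiX :: "('c \<Rightarrow> 'c) \<Rightarrow> ('h \<Rightarrow> 'h) \<Rightarrow> ('c \<times> 'h) list \<Rightarrow> ('c \<times> 'h) list" where
  "xiX be al x = map (xi1 be al) x"

definition X_hom_bialgebra :: "('k::field \<Rightarrow> 'c::ab_group_add \<Rightarrow> 'c) \<Rightarrow> ('k \<Rightarrow> 'h::ab_group_add \<Rightarrow> 'h)
    \<Rightarrow> (('c \<times> 'h) list \<Rightarrow> ('c \<times> 'h) list \<Rightarrow> ('c \<times> 'h) list) \<Rightarrow> ('c \<times> 'h)
    \<Rightarrow> (('c \<times> 'h) list \<Rightarrow> (('c \<times> 'h) \<times> ('c \<times> 'h)) list) \<Rightarrow> (('c \<times> 'h) list \<Rightarrow> 'k)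
    \<Rightarrow> ('c \<Rightarrow> 'c) \<Rightarrow> ('h \<Rightarrow> 'h) \<Rightarrow> bool" where
  "X_hom_bialgebra sC sH mu u D e be al \<longleftrightarrow>
    (let TX = tprod (lins sC) (lins sH); xi = xiX be al; xii = xi1 (inv be) (inv al) in
     (\<forall>x y z. teq TX (mu (xi x) (mu y z)) (mu (mu x y) (xi z))) \<and>
     (\<forall>x y. teq TX (xi (mu x y)) (mu (xi x) (xi y))) \<and>
     (\<forall>x. teq TX (mu x [u]) (xi x) \<and> teq TX (mu [u] x) (xi x)) \<and>
     teq TX (xi [u]) [u] \<and>
     (\<forall>x. teq (tprod TX (tprod TX TX))
            [(xii p, q, r). (p, y) \<leftarrow> D x, (q, r) \<leftarrow> D [y]]
            [(p, q, xii y). (z, y) \<leftarrow> D x, (p, q) \<leftarrow> D [z]]) \<and>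
     (\<forall>x. teq (tprod TX TX) (D (xi x)) (map (\<lambda>(p, q). (xi1 be al p, xi1 be al q)) (D x))) \<and>
     (\<forall>x. teq TX [(sC (e [q]) (fst p), snd p). (p, q) \<leftarrow> D x] (map xii x) \<and>
          teq TX [(sC (e [p]) (fst q), snd q). (p, q) \<leftarrow> D x] (map xii x)) \<and>
     (\<forall>x. e (xi x) = e x) \<and>
     (\<forall>x y. teq (tprod TX TX) (D (mu x y))
              [(v, w). (p, q) \<leftarrow> D x, (p', q') \<leftarrow> D y, v \<leftarrow> mu [p] [p'], w \<leftarrow> mu [q] [q']]) \<and>
     teq (tprod TX TX) (D [u]) [(u, u)] \<and>
     (\<forall>x y. e (mu x y) = e x * e y) \<and> e [u] = 1)"

definition phir :: "('h \<Rightarrow> 'h \<Rightarrow> 'h) \<Rightarrow> ('h \<Rightarrow> ('h \<times> 'h) list) \<Rightarrow> ('h \<Rightarrow> 'h)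
    \<Rightarrow> ('c \<Rightarrow> 'c \<Rightarrow> 'c) \<Rightarrow> ('h \<Rightarrow> 'h \<Rightarrow> 'c) \<Rightarrow> int \<Rightarrow> int
    \<Rightarrow> ('c \<times> 'h) list \<Rightarrow> 'h \<Rightarrow> ('c \<times> 'h) list" where
  "phir mH DH al mC sg m k x l =
     [(mC a (sg (zpow al (k + 1) h1) (zpow al (k + 1 - m) l1)), mH (al h2) (zpow al (1 - m) l2)).
       (a, h) \<leftarrow> x, (h1, h2) \<leftarrow> DH h, (l1, l2) \<leftarrow> DH l]"

definition sigbar :: "'h \<Rightarrow> ('h \<Rightarrow> 'h) \<Rightarrow> ('h \<Rightarrow> 'h \<Rightarrow> 'c) \<Rightarrow> int \<Rightarrow> int
    \<Rightarrow> 'h \<Rightarrow> 'h \<Rightarrow> ('c \<times> 'h) list" where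
  "sigbar uH al sg m k h l = [(sg (zpow al (k + 1 - m) h) (zpow al (k + 1 - m) l), uH)]"

end

theory Submission
  imports Defs
begin

text \<open>Right multiplication in \<open>X\<close> by \<open>1 \<otimes> \<alpha>\<^sup>-\<^sup>m(l)\<close> is exactly \<open>\<phi>\<^sup>r(- \<otimes> l)\<close>, once one
  knows \<open>\<beta> \<circ> \<sigma> = \<sigma> \<circ> (\<alpha> \<otimes> \<alpha>)\<close>; together with \<open>\<sigma>(1, l) = \<epsilon>(l) 1\<close> this also identifies
  \<open>(1 \<otimes> \<alpha>\<^sup>-\<^sup>m(l))(1 \<otimes> \<alpha>\<^sup>-\<^sup>m(g))\<close> with \<open>\<Sum> \<phi>\<^sup>r(sigbar(l\<^sub>1, g\<^sub>1) \<otimes> l\<^sub>2g\<^sub>2)\<close>. Applying \<open>id \<otimes> \<epsilon>\<close>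
  shows that both identities for \<open>\<sigma>\<close> are forced by multiplicativity of \<open>\<xi>\<close> and by the left
  unit law of \<open>X\<close>. The module axiom is then Hom-associativity of \<open>X\<close> for \<open>x\<close>,
  \<open>1 \<otimes> \<alpha>\<^sup>-\<^sup>m(l)\<close> and \<open>1 \<otimes> \<alpha>\<^sup>-\<^sup>m(g)\<close>, and the unit axiom is the right unit law of \<open>X\<close>.\<close>

section \<open>Linear and bilinear forms on list-encoded tensors\<close>

definition linear_form :: "('k::field \<Rightarrow> 'a::ab_group_add \<Rightarrow> 'a) \<Rightarrow> ('a \<Rightarrow> 'k) \<Rightarrow> bool" where
  "linear_form s f \<longleftrightarrow> (\<forall>x y. f (x + y) = f x + f y) \<and> (\<forall>c x. f (s c x) = c * f x)"

definition bilinear_form :: "('k::field \<Rightarrow> 'a::ab_group_add \<Rightarrow> 'a) \<Rightarrow> ('k \<Rightarrow> 'b::ab_group_add \<Rightarrow> 'b)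
    \<Rightarrow> ('a \<Rightarrow> 'b \<Rightarrow> 'k) \<Rightarrow> bool" where
  "bilinear_form s1 s2 F \<longleftrightarrow> (\<forall>y. linear_form s1 (\<lambda>x. F x y)) \<and> (\<forall>x. linear_form s2 (F x))"

lemma linear_add_scale: "Vector_Spaces.linear s1 s2 f \<Longrightarrow> f (x + y) = f x + f y \<and> f (s1 c x) = s2 c (f x)"
  by (simp add: Vector_Spaces.linear_iff)

lemma bilin_add_scale:
  "bilin sa sb sc f \<Longrightarrow> f (x + y) z = f x z + f y z \<and> f (sa c x) z = sc c (f x z)
    \<and> f x (z1 + z2) = f x z1 + f x z2 \<and> f x (sb c z) = sc c (f x z)"
  by (auto simp: bilin_def Vector_Spaces.linear_iff)

lemma linear_formD:
  assumes "linear_form s f"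
  shows "f (x + y) = f x + f y" "f (s c x) = c * f x"
  using assms unfolding linear_form_def by auto

lemma bilinear_formD:
  assumes "bilinear_form s1 s2 F"
  shows "F (x + y) z = F x z + F y z" "F (s1 c x) z = c * F x z"
    "F x (z1 + z2) = F x z1 + F x z2" "F x (s2 c z) = c * F x z"
  using assms unfolding bilinear_form_def linear_form_def by auto

lemma bilinear_form_compose:
  assumes "bilinear_form s s F" "\<And>x y. f (x + y) = f x + f y" "\<And>c x. f (s c x) = s c (f x)"
  shows "bilinear_form s s (\<lambda>p q. F (f p) (f q))"
  using assms by (simp add: bilinear_form_def linear_form_def)

lemma linear_form_zero: "linear_form s f \<Longrightarrow> f 0 = 0"
  unfolding linear_form_def by (metis add_cancel_right_right add_0)

lemma linear_form_sum: "linear_form s f \<Longrightarrow> f (sum g B) = (\<Sum>b\<in>B. f (g b))"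
  by (induction B rule: infinite_finite_induct) (simp_all add: linear_form_zero linear_formD)

lemma linear_form_sum_list: "linear_form s f \<Longrightarrow> f (sum_list xs) = sum_list (map f xs)"
  by (induction xs) (simp_all add: linear_form_zero linear_formD)

lemma vector_space_field: "Vector_Spaces.vector_space ((*) :: 'k::field \<Rightarrow> 'k \<Rightarrow> 'k)"
  by unfold_locales (simp_all add: algebra_simps)

lemma lins_iff_linear_form: "Vector_Spaces.vector_space s \<Longrightarrow> f \<in> lins s \<longleftrightarrow> linear_form s f"
  unfolding lins_def linear_form_def by (simp add: Vector_Spaces.linear_iff vector_space_field)

lemma finite_coordinates:
  fixes s :: "'k::field \<Rightarrow> 'a::ab_group_add \<Rightarrow> 'a"
  assumes "Vector_Spaces.vector_space s" and "finite X"
  obtains B Fs where "finite B" "\<And>b. Fs b \<in> lins s" "\<And>x. x \<in> X \<Longrightarrow> x = (\<Sum>b\<in>B. s (Fs b x) b)"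
proof -
  interpret vector_space s by fact
  define E where "E = extend_basis {}"
  have E: "independent E" "span E = UNIV"
    using independent_extend_basis[of "{}"] span_extend_basis[of "{}"]
    by (simp_all add: E_def independent_empty)
  define B where "B = (\<Union>x\<in>X. {b. representation E x b \<noteq> 0})"
  have "finite B"
    unfolding B_def using \<open>finite X\<close> by (simp add: finite_representation)
  moreover have "(\<lambda>v. representation E v b) \<in> lins s" for b
    using linear_representation[OF E] by (simp add: lins_def)
  moreover have "x = (\<Sum>b\<in>B. s (representation E x b) b)" if "x \<in> X" for x
  proof -
    have "(\<Sum>b\<in>B. s (representation E x b) b) =
        (\<Sum>b | representation E x b \<noteq> 0. s (representation E x b) b)"
      using \<open>finite B\<close> that by (intro sum.mono_neutral_right) (auto simp: B_def)
    also have "\<dots> = x"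
      by (rule sum_nonzero_representation_eq) (use E in auto)
    finally show ?thesis by simp
  qed
  ultimately show thesis
    by (intro that[of B "\<lambda>b v. representation E v b"])
qed

lemma linear_forms_separate:
  fixes s :: "'k::field \<Rightarrow> 'a::ab_group_add \<Rightarrow> 'a"
  assumes vs: "Vector_Spaces.vector_space s" and eq: "\<And>F. linear_form s F \<Longrightarrow> F x = F y"
  shows "x = y"
proof -
  obtain B Fs where "finite B" "\<And>b. Fs b \<in> lins s"
    "\<And>z. z \<in> {x, y} \<Longrightarrow> z = (\<Sum>b\<in>B. s (Fs b z) b)"
    by (rule finite_coordinates[OF vs, of "{x, y}"]) auto
  then show ?thesis
    using eq lins_iff_linear_form[OF vs] by (metis (no_types, lifting) insertCI sum.cong)
qed

definition tensor_eval :: "('a \<Rightarrow> 'b \<Rightarrow> 'k::monoid_add) \<Rightarrow> ('a \<times> 'b) list \<Rightarrow> 'k" where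
  "tensor_eval F xs = sum_list (map (case_prod F) xs)"

lemma tensor_eval_Nil [simp]: "tensor_eval F [] = 0"
  by (simp add: tensor_eval_def)

lemma tensor_eval_Cons [simp]: "tensor_eval F ((a, b) # xs) = F a b + tensor_eval F xs"
  by (simp add: tensor_eval_def)

lemma tensor_eval_append [simp]: "tensor_eval F (xs @ ys) = tensor_eval F xs + tensor_eval F ys"
  by (simp add: tensor_eval_def)

lemma tensor_eval_concat_map [simp]:
  "tensor_eval F (concat (map (\<lambda>(a, b). L a b) xs)) = tensor_eval (\<lambda>a b. tensor_eval F (L a b)) xs"
  by (induction xs) (auto simp: tensor_eval_def)

lemma tensor_eval_concat_concat [simp]:
  "tensor_eval F (concat (concat (map (\<lambda>(a, b). map (\<lambda>(c, d). L a b c d) ys) xs))) =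
   tensor_eval (\<lambda>a b. tensor_eval (\<lambda>c d. tensor_eval F (L a b c d)) ys) xs"
proof -
  have "tensor_eval F (concat (map (\<lambda>(c, d). L a b c d) ys)) =
      tensor_eval (\<lambda>c d. tensor_eval F (L a b c d)) ys" for a b
    by (induction ys) auto
  then show ?thesis by (induction xs) auto
qed

lemma tensor_eval_map [simp]:
  "tensor_eval F (map (\<lambda>(a, b). (f a b, g a b)) xs) = tensor_eval (\<lambda>a b. F (f a b) (g a b)) xs"
  by (induction xs) (auto simp: tensor_eval_def)

lemma tensor_eval_add [simp]:
  "tensor_eval (\<lambda>x y. (f x y :: 'k::comm_monoid_add) + g x y) xs = tensor_eval f xs + tensor_eval g xs"
  by (induction xs) (auto simp: tensor_eval_def algebra_simps)

lemma tensor_eval_cmult [simp]: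
  "tensor_eval (\<lambda>x y. (c :: 'k::comm_semiring_0) * f x y) xs = c * tensor_eval f xs"
  by (induction xs) (auto simp: tensor_eval_def algebra_simps)

lemma tensor_eval_zero [simp]: "tensor_eval (\<lambda>a b. 0) xs = 0"
  by (induction xs) auto

lemma tensor_eval_swap:
  "tensor_eval (\<lambda>a b. tensor_eval (\<lambda>c d. (f a b c d :: 'k::comm_monoid_add)) ys) xs =
   tensor_eval (\<lambda>c d. tensor_eval (\<lambda>a b. f a b c d) xs) ys"
  by (induction xs) auto

text \<open>Expanding the first tensor factors in coordinates reduces a bilinear form to
  products of linear forms, which is all that \<open>teq\<close> compares.\<close>

lemma tensor_eval_eq_if_teq:
  fixes sV :: "'k::field \<Rightarrow> 'a::ab_group_add \<Rightarrow> 'a" and sW :: "'k \<Rightarrow> 'b::ab_group_add \<Rightarrow> 'b"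
  assumes vV: "Vector_Spaces.vector_space sV" and vW: "Vector_Spaces.vector_space sW"
    and xy: "teq (tprod (lins sV) (lins sW)) xs ys" and Phi: "bilinear_form sV sW Phi"
  shows "tensor_eval Phi xs = tensor_eval Phi ys"
proof -
  obtain B Fs where Fs: "\<And>b. Fs b \<in> lins sV"
    and coord: "\<And>v. v \<in> fst ` set (xs @ ys) \<Longrightarrow> v = (\<Sum>b\<in>B. sV (Fs b v) b)"
    by (rule finite_coordinates[OF vV, of "fst ` set (xs @ ys)"]) auto
  define T where "T zs b = sum_list (map (\<lambda>(v, w). sW (Fs b v) w) zs)" for zs b
  have expand: "tensor_eval Phi zs = (\<Sum>b\<in>B. Phi b (T zs b))" if "set zs \<subseteq> set (xs @ ys)" for zs
    using that
  proof (induction zs)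
    case Nil
    have "Phi b 0 = 0" for b by (metis Phi bilinear_form_def linear_form_zero)
    then show ?case by (simp add: T_def)
  next
    case (Cons z zs)
    obtain v w where z: "z = (v, w)" by fastforce
    have "v \<in> fst ` set (xs @ ys)" using Cons.prems z by force
    then have "Phi v w = Phi (\<Sum>b\<in>B. sV (Fs b v) b) w" using coord by metis
    also have "\<dots> = (\<Sum>b\<in>B. Phi (sV (Fs b v) b) w)"
      using Phi linear_form_sum[of sV "\<lambda>x. Phi x w"] by (simp add: bilinear_form_def)
    also have "\<dots> = (\<Sum>b\<in>B. Phi b (sW (Fs b v) w))"
      by (simp add: bilinear_formD[OF Phi])
    finally show ?case
      using Cons by (simp add: z T_def bilinear_formD[OF Phi] sum.distrib)
  qed
  have "T xs b = T ys b" for b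
  proof (rule linear_forms_separate[OF vW])
    fix G assume G: "linear_form sW G"
    have eval: "G (T zs b) = sum_list (map (\<lambda>(v, w). Fs b v * G w) zs)" for zs
      unfolding T_def linear_form_sum_list[OF G] map_map
      by (intro arg_cong[where f = sum_list] map_cong) (auto simp: linear_formD[OF G])
    have "(\<lambda>(v, w). Fs b v * G w) \<in> tprod (lins sV) (lins sW)"
      unfolding tprod_def using Fs G lins_iff_linear_form[OF vW] by blast
    then show "G (T xs b) = G (T ys b)"
      using xy unfolding eval teq_def by auto
  qed
  then show ?thesis using expand[of xs] expand[of ys] by simp
qed

lemma teq_tprod_iff:
  fixes sV :: "'k::field \<Rightarrow> 'a::ab_group_add \<Rightarrow> 'a" and sW :: "'k \<Rightarrow> 'b::ab_group_add \<Rightarrow> 'b"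
  assumes vV: "Vector_Spaces.vector_space sV" and vW: "Vector_Spaces.vector_space sW"
  shows "teq (tprod (lins sV) (lins sW)) xs ys \<longleftrightarrow>
    (\<forall>F. bilinear_form sV sW F \<longrightarrow> tensor_eval F xs = tensor_eval F ys)"
proof
  assume "\<forall>F. bilinear_form sV sW F \<longrightarrow> tensor_eval F xs = tensor_eval F ys"
  moreover have "bilinear_form sV sW (\<lambda>x y. F x * G y)" if "F \<in> lins sV" "G \<in> lins sW" for F G
    using that lins_iff_linear_form[OF vV] lins_iff_linear_form[OF vW]
    by (auto simp: bilinear_form_def linear_form_def algebra_simps)
  ultimately show "teq (tprod (lins sV) (lins sW)) xs ys"
    unfolding teq_def tprod_def tensor_eval_def by fastforce
qed (use tensor_eval_eq_if_teq[OF vV vW] in blast)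

lemma teq_trans [trans]: "teq T xs ys \<Longrightarrow> teq T ys zs \<Longrightarrow> teq T xs zs"
  unfolding teq_def by simp

lemma teq_sym: "teq T xs ys \<Longrightarrow> teq T ys xs"
  unfolding teq_def by simp

section \<open>Integer powers of a bijection\<close>

lemma zpow_0 [simp]: "zpow f 0 x = x"
  by (simp add: zpow_def)

lemma zpow_1: "zpow f 1 x = f x"
  by (simp add: zpow_def)

lemma zpow_minus_1: "zpow f (-1) x = inv f x"
  by (simp add: zpow_def)

lemma zpow_succ:
  assumes "bij f"
  shows "zpow f (n + 1) x = f (zpow f n x)"
proof (cases "n \<ge> 0")
  case True
  then have "nat (n + 1) = Suc (nat n)" by simp
  then show ?thesis using True by (simp add: zpow_def)
next
  case False
  show ?thesis
  proof (cases "n = -1")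
    case True
    then show ?thesis using assms by (simp add: zpow_def bij_is_surj surj_f_inv_f)
  next
    case False2: False
    define j where "j = nat (- n - 2)"
    have j: "nat (- n) = Suc (Suc j)" "nat (- (n + 1)) = Suc j"
      using False False2 unfolding j_def by auto
    moreover have "(inv f ^^ Suc (Suc j)) x = inv f ((inv f ^^ Suc j) x)"
      by (simp only: funpow.simps(2) o_apply)
    ultimately show ?thesis
      using False False2 assms by (simp add: zpow_def bij_is_surj surj_f_inv_f del: funpow.simps)
  qed
qed

lemma zpow_pred:
  assumes "bij f"
  shows "zpow f (n - 1) x = inv f (zpow f n x)"
  using zpow_succ[OF assms, of "n - 1"] assms by (simp add: bij_is_inj)

lemma zpow_add:
  assumes "bij f"
  shows "zpow f a (zpow f b x) = zpow f (a + b) x"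
proof (induction a rule: int_induct[where k = 0])
  case (step1 i)
  then show ?case using zpow_succ[OF assms] by (metis add.commute add.left_commute)
next
  case (step2 i)
  then show ?case using zpow_pred[OF assms] by (metis add.commute add_diff_eq)
qed simp

lemma zpow_induct:
  assumes "bij f" "P id" "\<And>g. P g \<Longrightarrow> P (\<lambda>x. f (g x))" "\<And>g. P g \<Longrightarrow> P (\<lambda>x. inv f (g x))"
  shows "P (zpow f n)"
proof (induction n rule: int_induct[where k = 0])
  case base
  then show ?case using assms(2) by (simp add: id_def zpow_def)
next
  case (step1 i)
  have "zpow f (i + 1) = (\<lambda>x. f (zpow f i x))" using zpow_succ[OF assms(1)] by auto
  then show ?case using assms(3) step1 by simp
next
  case (step2 i)
  have "zpow f (i - 1) = (\<lambda>x. inv f (zpow f i x))" using zpow_pred[OF assms(1)] by auto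
  then show ?case using assms(4) step2 by simp
qed

lemma inv_commute:
  assumes "bij f" "\<And>x. f (g x) = g (f x)"
  shows "inv f (g x) = g (inv f x)"
  using assms by (metis bij_inv_eq_iff)

lemma inv_hom2:
  assumes "bij f" "\<And>x y. f (op x y) = op (f x) (f y)"
  shows "inv f (op x y) = op (inv f x) (inv f y)"
  using assms by (metis bij_inv_eq_iff)

lemma zpow_hom:
  assumes f: "bij f" "\<And>x y. f (x + y) = f x + f y" "\<And>c x. f (s c x) = s c (f x)"
    "\<And>x y. f (mu x y) = mu (f x) (f y)" "f u = u"
  shows "zpow f n (x + y) = zpow f n x + zpow f n y" "zpow f n (s c x) = s c (zpow f n x)"
    "zpow f n (mu x y) = mu (zpow f n x) (zpow f n y)" "zpow f n u = u"
proof -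
  have inv_f: "inv f (x + y) = inv f x + inv f y" "inv f (s c x) = s c (inv f x)"
    "inv f (mu x y) = mu (inv f x) (inv f y)" "inv f u = u" for x y c
    using inv_hom2[of f "(+)", OF f(1,2)] inv_commute[of f "s c", OF f(1,3)]
      inv_hom2[of f mu, OF f(1,4)] f(1,5) by (metis bij_inv_eq_iff)+
  define hom where "hom g \<longleftrightarrow> (\<forall>x y. g (x + y) = g x + g y) \<and> (\<forall>c x. g (s c x) = s c (g x))
      \<and> (\<forall>x y. g (mu x y) = mu (g x) (g y)) \<and> g u = u" for g
  have "hom (zpow f n)"
    by (rule zpow_induct[OF f(1)]) (simp_all add: hom_def f(2-5) inv_f)
  then show "zpow f n (x + y) = zpow f n x + zpow f n y" "zpow f n (s c x) = s c (zpow f n x)"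
    "zpow f n (mu x y) = mu (zpow f n x) (zpow f n y)" "zpow f n u = u"
    unfolding hom_def by blast+
qed

section \<open>The Hom-algebra \<open>X = C \<otimes> H\<close>\<close>

locale hom_crossed_product =
  fixes sH :: "'k::field \<Rightarrow> 'h::ab_group_add \<Rightarrow> 'h"
    and mH :: "'h \<Rightarrow> 'h \<Rightarrow> 'h" and uH :: 'h and al :: "'h \<Rightarrow> 'h"
    and DH :: "'h \<Rightarrow> ('h \<times> 'h) list" and eH :: "'h \<Rightarrow> 'k"
    and sC :: "'k \<Rightarrow> 'c::ab_group_add \<Rightarrow> 'c"
    and mC :: "'c \<Rightarrow> 'c \<Rightarrow> 'c" and uC :: 'c and be :: "'c \<Rightarrow> 'c"
    and act :: "'h \<Rightarrow> 'c \<Rightarrow> 'c" and sg :: "'h \<Rightarrow> 'h \<Rightarrow> 'c"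
    and m k :: int
  assumes H: "hom_bialgebra sH mH uH DH eH al"
    and C_alg: "hom_algebra sC mC uC be"
    and C_mod: "weak_hom_module_algebra sH DH eH sC mC uC act"
    and sg_lin: "bilin sH sH sC sg"
    and X_assoc: "\<And>x y z. teq (tprod (lins sC) (lins sH))
      (multX mH DH al mC be act sg m k (xiX be al x) (multX mH DH al mC be act sg m k y z))
      (multX mH DH al mC be act sg m k (multX mH DH al mC be act sg m k x y) (xiX be al z))"
    and X_mult: "\<And>x y. teq (tprod (lins sC) (lins sH))
      (xiX be al (multX mH DH al mC be act sg m k x y))
      (multX mH DH al mC be act sg m k (xiX be al x) (xiX be al y))"
    and X_unit_right: "\<And>x. teq (tprod (lins sC) (lins sH))
      (multX mH DH al mC be act sg m k x [(uC, uH)]) (xiX be al x)"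
    and X_unit_left: "\<And>x. teq (tprod (lins sC) (lins sH))
      (multX mH DH al mC be act sg m k [(uC, uH)] x) (xiX be al x)"
begin

abbreviation "alpha n \<equiv> zpow al n"
abbreviation "beta n \<equiv> zpow be n"
abbreviation "TH \<equiv> tprod (lins sH) (lins sH)"
abbreviation "TX \<equiv> tprod (lins sC) (lins sH)"
abbreviation "mu \<equiv> multX mH DH al mC be act sg m k"
abbreviation "ph \<equiv> phir mH DH al mC sg m k"
abbreviation "xi \<equiv> xiX be al"

lemma H_alg: "hom_algebra sH mH uH al" and H_coalg: "hom_coalgebra sH DH eH al"
  using H unfolding hom_bialgebra_def by auto

lemma vH: "Vector_Spaces.vector_space sH" and vC: "Vector_Spaces.vector_space sC"
  using H_alg C_alg unfolding hom_algebra_def by auto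

lemma mH_bilinear: "mH (x + y) z = mH x z + mH y z" "mH (sH c x) z = sH c (mH x z)"
    "mH x (y + z) = mH x y + mH x z" "mH x (sH c y) = sH c (mH x y)"
  using H_alg bilin_add_scale[of sH sH sH mH] unfolding hom_algebra_def by auto

lemma mC_bilinear: "mC (x + y) z = mC x z + mC y z" "mC (sC c x) z = sC c (mC x z)"
    "mC x (y + z) = mC x y + mC x z" "mC x (sC c y) = sC c (mC x y)"
  using C_alg bilin_add_scale[of sC sC sC mC] unfolding hom_algebra_def by auto

lemma sg_bilinear: "sg (x + y) z = sg x z + sg y z" "sg (sH c x) z = sC c (sg x z)"
    "sg x (y + z) = sg x y + sg x z" "sg x (sH c y) = sC c (sg x y)"
  using sg_lin bilin_add_scale[of sH sH sC sg] by auto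

lemma act_bilinear: "act (x + y) z = act x z + act y z" "act (sH c x) z = sC c (act x z)"
    "act x (b + d) = act x b + act x d" "act x (sC c' b) = sC c' (act x b)"
  using C_mod bilin_add_scale[of sH sC sC act] unfolding weak_hom_module_algebra_def by auto

lemma al_linear: "al (x + y) = al x + al y" "al (sH c x) = sH c (al x)"
  using H_alg linear_add_scale[of sH sH al] unfolding hom_algebra_def by auto

lemma be_linear: "be (x + y) = be x + be y" "be (sC c x) = sC c (be x)"
  using C_alg linear_add_scale[of sC sC be] unfolding hom_algebra_def by auto

lemma linear_form_eH: "linear_form sH eH"
  using H_coalg lins_iff_linear_form[OF vH] unfolding hom_coalgebra_def by auto

lemmas eH_linear = linear_formD[OF linear_form_eH]

lemma bij_al: "bij al" and al_mult: "al (mH x y) = mH (al x) (al y)" and al_uH: "al uH = uH"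
  and mH_uH_left: "mH uH x = al x"
  using H_alg unfolding hom_algebra_def by auto

lemma bij_be: "bij be" and be_mult: "be (mC x y) = mC (be x) (be y)" and be_uC: "be uC = uC"
  and mC_uC_right: "mC x uC = be x" and mC_uC_left: "mC uC x = be x"
  using C_alg unfolding hom_algebra_def by auto

lemma eH_mult: "eH (mH x y) = eH x * eH y" and eH_uH: "eH uH = 1"
  using H unfolding hom_bialgebra_def by auto

lemma eH_al: "eH (al x) = eH x"
  using H_coalg unfolding hom_coalgebra_def by auto

lemma act_uC: "act h uC = sC (eH h) uC"
  using C_mod unfolding weak_hom_module_algebra_def by auto

lemma alpha_hom: "alpha n (x + y) = alpha n x + alpha n y" "alpha n (sH c x) = sH c (alpha n x)"
    "alpha n (mH x y) = mH (alpha n x) (alpha n y)" "alpha n uH = uH"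
  using zpow_hom[of al sH mH uH, OF bij_al al_linear al_mult al_uH] by auto

lemma beta_hom: "beta n (x + y) = beta n x + beta n y" "beta n (sC c x) = sC c (beta n x)"
    "beta n (mC x y) = mC (beta n x) (beta n y)" "beta n uC = uC"
  using zpow_hom[of be sC mC uC, OF bij_be be_linear be_mult be_uC] by auto

lemma alpha_alpha: "alpha a (alpha b x) = alpha (a + b) x"
  using zpow_add[OF bij_al] by blast

lemma al_alpha: "al (alpha n x) = alpha (n + 1) x"
  using zpow_succ[OF bij_al] by metis

lemma alpha_al: "alpha n (al x) = alpha (n + 1) x"
  using zpow_add[OF bij_al, of n 1] zpow_1 by metis

lemma eH_alpha: "eH (alpha n x) = eH x"
proof -
  have eH_inv_al: "eH (inv al y) = eH y" for y
    by (metis bij_al bij_inv_eq_iff eH_al)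
  have "\<forall>x. eH (alpha n x) = eH x"
    by (rule zpow_induct[OF bij_al, where P = "\<lambda>g. \<forall>x. eH (g x) = eH x"])
      (simp_all add: eH_al eH_inv_al)
  then show ?thesis by blast
qed

lemmas linear_simps = mH_bilinear mC_bilinear sg_bilinear act_bilinear al_linear be_linear eH_linear
  alpha_hom(1,2) beta_hom(1,2)

lemma teqH_eval: "teq TH xs ys \<Longrightarrow> bilinear_form sH sH F \<Longrightarrow> tensor_eval F xs = tensor_eval F ys"
  using tensor_eval_eq_if_teq[OF vH vH] by blast

lemma teqX_iff: "teq TX xs ys \<longleftrightarrow> (\<forall>F. bilinear_form sC sH F \<longrightarrow> tensor_eval F xs = tensor_eval F ys)"
  using teq_tprod_iff[OF vC vH] .

lemma teqX_eval: "teq TX xs ys \<Longrightarrow> bilinear_form sC sH F \<Longrightarrow> tensor_eval F xs = tensor_eval F ys"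
  using teqX_iff by blast

lemma eval_Delta_linear:
  assumes "bilinear_form sH sH F"
  shows "tensor_eval F (DH (x + y)) = tensor_eval F (DH x) + tensor_eval F (DH y)"
    "tensor_eval F (DH (sH c x)) = c * tensor_eval F (DH x)"
proof -
  have "teq TH (DH (x + y)) (DH x @ DH y)"
    "teq TH (DH (sH c x)) (map (\<lambda>(p, q). (sH c p, q)) (DH x))"
    using H_coalg unfolding hom_coalgebra_def by auto
  then show "tensor_eval F (DH (x + y)) = tensor_eval F (DH x) + tensor_eval F (DH y)"
    "tensor_eval F (DH (sH c x)) = c * tensor_eval F (DH x)"
    using teqH_eval[OF _ assms] by (simp_all add: bilinear_formD[OF assms])
qed

definition linear_comultiplicative :: "('h \<Rightarrow> 'h) \<Rightarrow> bool" where
  "linear_comultiplicative g \<longleftrightarrow>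
    (\<forall>x y. g (x + y) = g x + g y) \<and> (\<forall>c x. g (sH c x) = sH c (g x)) \<and>
    (\<forall>F h. bilinear_form sH sH F \<longrightarrow>
      tensor_eval F (DH (g h)) = tensor_eval (\<lambda>p q. F (g p) (g q)) (DH h))"

lemma linear_comultiplicative_comp:
  assumes f: "linear_comultiplicative f" and g: "linear_comultiplicative g"
  shows "linear_comultiplicative (\<lambda>x. f (g x))"
  unfolding linear_comultiplicative_def
proof (intro conjI allI impI)
  fix F h assume F: "bilinear_form sH sH F"
  have "f (x + y) = f x + f y" "f (sH c x) = sH c (f x)" for x y c
    using f unfolding linear_comultiplicative_def by simp_all
  then have "bilinear_form sH sH (\<lambda>p q. F (f p) (f q))"
    by (intro bilinear_form_compose[OF F])
  then show "tensor_eval F (DH (f (g h))) = tensor_eval (\<lambda>p q. F (f (g p)) (f (g q))) (DH h)"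
    using f g F unfolding linear_comultiplicative_def by simp
qed (use f g in \<open>simp_all add: linear_comultiplicative_def\<close>)

lemma linear_comultiplicative_al: "linear_comultiplicative al"
proof -
  have Delta_al: "teq TH (DH (al h)) (map (\<lambda>(p, q). (al p, al q)) (DH h))" for h
    using H_coalg unfolding hom_coalgebra_def by auto
  have "tensor_eval F (DH (al h)) = tensor_eval (\<lambda>p q. F (al p) (al q)) (DH h)"
    if "bilinear_form sH sH F" for F h
    using teqH_eval[OF Delta_al that] by simp
  then show ?thesis unfolding linear_comultiplicative_def by (simp add: al_linear)
qed

lemma linear_comultiplicative_inv_al: "linear_comultiplicative (inv al)"
proof -
  have inv_al: "inv al (x + y) = inv al x + inv al y" "inv al (sH c x) = sH c (inv al x)" for x y c
    using inv_hom2[of al "(+)", OF bij_al al_linear(1)] inv_commute[of al "sH c", OF bij_al al_linear(2)]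
    by blast+
  have "tensor_eval F (DH (inv al h)) = tensor_eval (\<lambda>p q. F (inv al p) (inv al q)) (DH h)"
    if F: "bilinear_form sH sH F" for F h
  proof -
    define F' where "F' p q = F (inv al p) (inv al q)" for p q
    have F': "bilinear_form sH sH F'"
      unfolding F'_def by (rule bilinear_form_compose[OF F]) (simp_all add: inv_al)
    have "tensor_eval F (DH (inv al h)) = tensor_eval (\<lambda>p q. F' (al p) (al q)) (DH (inv al h))"
      using bij_al by (simp add: F'_def bij_is_inj)
    also have "\<dots> = tensor_eval F' (DH (al (inv al h)))"
      using linear_comultiplicative_al F' unfolding linear_comultiplicative_def by simp
    also have "\<dots> = tensor_eval F' (DH h)"
      using bij_al by (simp add: bij_is_surj surj_f_inv_f)
    finally show ?thesis unfolding F'_def .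
  qed
  then show ?thesis unfolding linear_comultiplicative_def using inv_al by simp
qed

lemma eval_Delta_alpha:
  assumes "bilinear_form sH sH F"
  shows "tensor_eval F (DH (alpha n h)) = tensor_eval (\<lambda>p q. F (alpha n p) (alpha n q)) (DH h)"
proof -
  have "linear_comultiplicative (alpha n)"
  proof (rule zpow_induct[OF bij_al])
    show "linear_comultiplicative id" by (simp add: linear_comultiplicative_def)
  qed (use linear_comultiplicative_comp linear_comultiplicative_al linear_comultiplicative_inv_al in blast)+
  then show ?thesis using assms unfolding linear_comultiplicative_def by blast
qed

lemma eval_Delta_uH: "bilinear_form sH sH F \<Longrightarrow> tensor_eval F (DH uH) = F uH uH"
  using H teqH_eval[of "DH uH" "[(uH, uH)]"] unfolding hom_bialgebra_def by auto

lemma eval_Delta_counit: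
  assumes f: "linear_form sH f"
  shows "tensor_eval (\<lambda>p q. eH p * f q) (DH h) = f (alpha (-1) h)"
    "tensor_eval (\<lambda>p q. eH q * f p) (DH h) = f (alpha (-1) h)"
proof -
  have counit: "sum_list [sH (eH p) q. (p, q) \<leftarrow> DH h] = inv al h"
    "sum_list [sH (eH q) p. (p, q) \<leftarrow> DH h] = inv al h"
    using H_coalg unfolding hom_coalgebra_def by auto
  have "f (sum_list (map (\<lambda>(p, q). sH (eH p) q) xs)) = tensor_eval (\<lambda>p q. eH p * f q) xs"
    "f (sum_list (map (\<lambda>(p, q). sH (eH q) p) xs)) = tensor_eval (\<lambda>p q. eH q * f p) xs" for xs
    by (induction xs) (auto simp: linear_formD[OF f] linear_form_zero[OF f])
  from this[of "DH h"] show "tensor_eval (\<lambda>p q. eH p * f q) (DH h) = f (alpha (-1) h)"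
    "tensor_eval (\<lambda>p q. eH q * f p) (DH h) = f (alpha (-1) h)"
    unfolding counit by (simp_all add: zpow_minus_1)
qed


lemma tensor_eval_xi: "tensor_eval F (xi xs) = tensor_eval (\<lambda>c q. F (be c) (al q)) xs"
  unfolding xiX_def xi1_def by simp

lemma tensor_eval_mult_left:
  "tensor_eval F (mu x y) = tensor_eval (\<lambda>a h. tensor_eval F (mu [(a, h)] y)) x"
  unfolding multX_def by simp

lemma tensor_eval_mult_right:
  "tensor_eval (F :: 'c \<Rightarrow> 'h \<Rightarrow> 'k) (mu z y) = tensor_eval (\<lambda>b g. tensor_eval F (mu z [(b, g)])) y"
  unfolding multX_def by (simp add: tensor_eval_swap[of _ y z])

lemma mult_teq_left:
  assumes "teq TX y y'"
  shows "teq TX (mu y z) (mu y' z)"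
  unfolding teqX_iff
proof (intro allI impI)
  fix F assume F: "bilinear_form sC sH F"
  have "bilinear_form sC sH (\<lambda>a h. tensor_eval F (mu [(a, h)] z))"
    unfolding multX_def
    by (simp add: bilinear_form_def linear_form_def linear_simps bilinear_formD[OF F] eval_Delta_linear)
  then show "tensor_eval F (mu y z) = tensor_eval F (mu y' z)"
    by (subst (1 2) tensor_eval_mult_left) (rule teqX_eval[OF assms])
qed

lemma mult_teq_right:
  assumes "teq TX y y'"
  shows "teq TX (mu z y) (mu z y')"
  unfolding teqX_iff
proof (intro allI impI)
  fix F assume F: "bilinear_form sC sH F"
  have "bilinear_form sC sH (\<lambda>b g. tensor_eval F (mu z [(b, g)]))"
    unfolding multX_def
    by (simp add: bilinear_form_def linear_form_def linear_simps bilinear_formD[OF F] eval_Delta_linear)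
  then show "tensor_eval F (mu z y) = tensor_eval F (mu z y')"
    by (subst (1 2) tensor_eval_mult_right) (rule teqX_eval[OF assms])
qed

lemma mult_uC_right:
  "teq TX (mu [(a, h)] [(uC, g)])
     [(mC a (be (sg (alpha k h1) (alpha k g1))), al (mH h2 g2)). (h1, h2) \<leftarrow> DH h, (g1, g2) \<leftarrow> DH g]"
  unfolding teqX_iff
proof (intro allI impI)
  fix F assume F: "bilinear_form sC sH F"
  have "tensor_eval F (mu [(a, h)] [(uC, g)]) =
    tensor_eval (\<lambda>h1 h2. tensor_eval (\<lambda>p1 p2. eH p1 * tensor_eval (\<lambda>g1 g2.
      F (mC a (be (sg (alpha (k + 1) p2) (alpha k g1)))) (al (mH h2 g2))) (DH g)) (DH h1)) (DH h)"
    unfolding multX_def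
    by (simp add: beta_hom act_uC eH_alpha mC_bilinear mC_uC_left bilinear_formD[OF F])
  also have "\<dots> = tensor_eval (\<lambda>h1 h2. tensor_eval (\<lambda>g1 g2.
      F (mC a (be (sg (alpha (k + 1) (alpha (-1) h1)) (alpha k g1)))) (al (mH h2 g2))) (DH g)) (DH h)"
    by (simp add: eval_Delta_counit linear_form_def linear_simps bilinear_formD[OF F])
  finally show "tensor_eval F (mu [(a, h)] [(uC, g)]) = tensor_eval F
     [(mC a (be (sg (alpha k h1) (alpha k g1))), al (mH h2 g2)). (h1, h2) \<leftarrow> DH h, (g1, g2) \<leftarrow> DH g]"
    by (simp add: alpha_alpha)
qed

lemma bilinear_form_counit_right: "linear_form sC G \<Longrightarrow> bilinear_form sC sH (\<lambda>c q. G c * eH q)"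
  by (auto simp: bilinear_form_def linear_form_def eH_linear algebra_simps)

lemma sigma_hom_shifted:
  "be (be (be (sg (alpha (k - 1) h) (alpha (k - 1) l)))) = be (be (sg (alpha k h) (alpha k l)))"
proof (rule linear_forms_separate[OF vC])
  fix G assume G: "linear_form sC G"
  let ?P = "\<lambda>c q. G c * eH q"
  have P: "bilinear_form sC sH ?P" by (rule bilinear_form_counit_right[OF G])
  have P_xi: "bilinear_form sC sH (\<lambda>c q. ?P (be c) (al q))"
    using G by (auto simp: bilinear_form_def linear_form_def eH_linear be_linear eH_al algebra_simps)
  have ac: "x * (eH a * eH b) = eH a * (eH b * x)" for x a b by (simp add: ac_simps)
  have "tensor_eval ?P (xi (mu [(uC, h)] [(uC, l)])) = tensor_eval (\<lambda>h1 h2. eH h2 *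
      tensor_eval (\<lambda>l1 l2. eH l2 * G (be (be (be (sg (alpha k h1) (alpha k l1)))))) (DH l)) (DH h)"
    unfolding tensor_eval_xi teqX_eval[OF mult_uC_right P_xi] by (simp add: mC_uC_left eH_al eH_mult ac)
  also have "\<dots> = G (be (be (be (sg (alpha k (alpha (-1) h)) (alpha k (alpha (-1) l))))))"
    by (simp add: eval_Delta_counit linear_form_def linear_simps linear_formD[OF G])
  finally have lhs: "tensor_eval ?P (xi (mu [(uC, h)] [(uC, l)])) =
      G (be (be (be (sg (alpha (k - 1) h) (alpha (k - 1) l)))))"
    by (simp add: alpha_alpha)
  have "tensor_eval ?P (mu (xi [(uC, h)]) (xi [(uC, l)])) = tensor_eval (\<lambda>h1 h2. eH h2 *
      tensor_eval (\<lambda>l1 l2. eH l2 * G (be (be (sg (alpha k h1) (alpha k l1))))) (DH (al l))) (DH (al h))"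
    unfolding xiX_def xi1_def using teqX_eval[OF mult_uC_right P]
    by (simp add: mC_uC_left eH_al eH_mult ac be_uC)
  also have "\<dots> = G (be (be (sg (alpha k (alpha (-1) (al h))) (alpha k (alpha (-1) (al l))))))"
    by (simp add: eval_Delta_counit linear_form_def linear_simps linear_formD[OF G])
  finally have rhs: "tensor_eval ?P (mu (xi [(uC, h)]) (xi [(uC, l)])) =
      G (be (be (sg (alpha k h) (alpha k l))))"
    by (simp add: alpha_alpha alpha_al)
  show "G (be (be (be (sg (alpha (k - 1) h) (alpha (k - 1) l))))) =
      G (be (be (sg (alpha k h) (alpha k l))))"
    using teqX_eval[OF X_mult P] lhs rhs by simp
qed

lemma sigma_hom: "be (sg u v) = sg (al u) (al v)"
proof -
  from sigma_hom_shifted[of "alpha (1 - k) u" "alpha (1 - k) v"]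
  have "be (be (be (sg u v))) = be (be (sg (al u) (al v)))"
    by (simp add: alpha_alpha zpow_1)
  then show ?thesis
    using bij_be by (simp add: bij_is_inj inj_eq)
qed

lemma sigma_unit_left_shifted: "be (be (sg uH (alpha (k - 1) g))) = sC (eH g) uC"
proof (rule linear_forms_separate[OF vC])
  fix G assume G: "linear_form sC G"
  let ?P = "\<lambda>c q. G c * eH q"
  have P: "bilinear_form sC sH ?P" by (rule bilinear_form_counit_right[OF G])
  have "tensor_eval ?P (mu [(uC, uH)] [(uC, g)]) = tensor_eval (\<lambda>h1 h2. tensor_eval (\<lambda>g1 g2.
      G (be (be (sg (alpha k h1) (alpha k g1)))) * eH (al (mH h2 g2))) (DH g)) (DH uH)"
    using teqX_eval[OF mult_uC_right P] by (simp add: mC_uC_left)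
  also have "\<dots> = tensor_eval (\<lambda>g1 g2. G (be (be (sg uH (alpha k g1)))) * eH g2) (DH g)"
    by (simp add: eval_Delta_uH bilinear_form_def linear_form_def linear_simps linear_formD[OF G]
        eH_al eH_mult eH_uH alpha_hom(4) algebra_simps)
  also have "\<dots> = G (be (be (sg uH (alpha (k - 1) g))))"
    using eval_Delta_counit(2)[of "\<lambda>g1. G (be (be (sg uH (alpha k g1))))" g]
    by (simp add: linear_form_def linear_simps linear_formD[OF G] alpha_alpha mult.commute)
  finally have "G (be (be (sg uH (alpha (k - 1) g)))) = tensor_eval ?P (mu [(uC, uH)] [(uC, g)])" ..
  also have "\<dots> = tensor_eval ?P (xi [(uC, g)])"
    by (rule teqX_eval[OF X_unit_left P])
  also have "\<dots> = G (sC (eH g) uC)"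
    by (simp add: xiX_def xi1_def be_uC eH_al linear_formD[OF G] mult.commute)
  finally show "G (be (be (sg uH (alpha (k - 1) g)))) = G (sC (eH g) uC)" .
qed

lemma sigma_unit_left: "sg uH v = sC (eH v) uC"
proof -
  from sigma_unit_left_shifted[of "alpha (1 - k) v"]
  have "be (be (sg uH v)) = be (be (sC (eH v) uC))"
    by (simp add: alpha_alpha eH_alpha be_linear be_uC)
  then show ?thesis
    using bij_be by (simp add: bij_is_inj inj_eq)
qed

lemma phir_eq_mult: "teq TX (ph x l) (mu x [(uC, alpha (-m) l)])"
  unfolding teqX_iff
proof (intro allI impI)
  fix F assume F: "bilinear_form sC sH F"
  have "tensor_eval F (mu [(a, h)] [(uC, alpha (-m) l)]) = tensor_eval F (ph [(a, h)] l)" for a h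
    using teqX_eval[OF mult_uC_right F]
    by (simp add: phir_def sigma_hom eval_Delta_alpha bilinear_form_def linear_form_def linear_simps
        bilinear_formD[OF F] al_alpha alpha_alpha al_mult alpha_al)
  moreover have "tensor_eval F (ph x l) = tensor_eval (\<lambda>a h. tensor_eval F (ph [(a, h)] l)) x"
    unfolding phir_def by simp
  ultimately show "tensor_eval F (ph x l) = tensor_eval F (mu x [(uC, alpha (-m) l)])"
    by (simp add: tensor_eval_mult_left[of F x])
qed

lemma phir_tensor_uH: "teq TX (ph [(s, uH)] w) [(be s, alpha (1 - m) w)]"
  unfolding teqX_iff
proof (intro allI impI)
  fix F assume F: "bilinear_form sC sH F"
  have "tensor_eval F (ph [(s, uH)] w) = tensor_eval F (mu [(s, uH)] [(uC, alpha (-m) w)])"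
    by (rule teqX_eval[OF phir_eq_mult F])
  also have "\<dots> = tensor_eval (\<lambda>g1 g2. eH g1 * F (be s) (al (al g2))) (DH (alpha (-m) w))"
    using teqX_eval[OF mult_uC_right F]
    by (simp add: eval_Delta_uH bilinear_form_def linear_form_def linear_simps bilinear_formD[OF F]
        alpha_hom(4) sigma_unit_left eH_alpha be_uC mC_uC_right mH_uH_left)
  also have "\<dots> = F (be s) (alpha (1 - m) w)"
    by (simp add: eval_Delta_counit linear_form_def linear_simps bilinear_formD[OF F] al_alpha alpha_alpha)
  finally show "tensor_eval F (ph [(s, uH)] w) = tensor_eval F [(be s, alpha (1 - m) w)]"
    by simp
qed

abbreviation "phir_sigbar l g \<equiv>
  concat [ph (sigbar uH al sg m k l1 g1) (mH l2 g2). (l1, l2) \<leftarrow> DH l, (g1, g2) \<leftarrow> DH g]"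

lemma mult_uC_uC_eq_phir_sigbar:
  "teq TX (mu [(uC, alpha (-m) l)] [(uC, alpha (-m) g)]) (phir_sigbar l g)"
  unfolding teqX_iff
proof (intro allI impI)
  fix F assume F: "bilinear_form sC sH F"
  let ?rhs = "tensor_eval (\<lambda>l1 l2. tensor_eval (\<lambda>g1 g2.
      F (be (sg (alpha (k + 1 - m) l1) (alpha (k + 1 - m) g1))) (alpha (1 - m) (mH l2 g2))) (DH g)) (DH l)"
  have "tensor_eval F (phir_sigbar l g) = ?rhs"
    by (simp add: sigbar_def teqX_eval[OF phir_tensor_uH F])
  moreover have "tensor_eval F (mu [(uC, alpha (-m) l)] [(uC, alpha (-m) g)]) = ?rhs"
    using teqX_eval[OF mult_uC_right F]
    by (simp add: mC_uC_left sigma_hom eval_Delta_alpha bilinear_form_def linear_form_def linear_simps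
        bilinear_formD[OF F] al_alpha alpha_alpha al_mult alpha_al alpha_hom(3) add_diff_eq)
  ultimately show "tensor_eval F (mu [(uC, alpha (-m) l)] [(uC, alpha (-m) g)]) =
      tensor_eval F (phir_sigbar l g)"
    by simp
qed

lemma phir_right_hom_module:
  shows "teq TX (ph (ph x l) (al g)) (mu (xi x) (phir_sigbar l g))"
    and "teq TX (ph x uH) (xi x)"
proof -
  let ?y = "[(uC, alpha (-m) l)]" and ?z = "[(uC, alpha (-m) g)]"
  have z: "[(uC, alpha (-m) (al g))] = xi ?z"
    by (simp add: xiX_def xi1_def be_uC al_alpha alpha_al)
  have "teq TX (ph (ph x l) (al g)) (mu (ph x l) [(uC, alpha (-m) (al g))])"
    by (rule phir_eq_mult)
  also have "teq TX \<dots> (mu (mu x ?y) (xi ?z))"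
    unfolding z by (rule mult_teq_left[OF phir_eq_mult])
  also have "teq TX \<dots> (mu (xi x) (mu ?y ?z))"
    by (rule teq_sym[OF X_assoc])
  also have "teq TX \<dots> (mu (xi x) (phir_sigbar l g))"
    by (rule mult_teq_right[OF mult_uC_uC_eq_phir_sigbar])
  finally show "teq TX (ph (ph x l) (al g)) (mu (xi x) (phir_sigbar l g))" .
  have "teq TX (ph x uH) (mu x [(uC, uH)])"
    using phir_eq_mult[of x uH] by (simp add: alpha_hom(4))
  also have "teq TX \<dots> (xi x)"
    by (rule X_unit_right)
  finally show "teq TX (ph x uH) (xi x)" .
qed

end

theorem lemma4p8:
  fixes sH :: "'k::field \<Rightarrow> 'h::ab_group_add \<Rightarrow> 'h"
    and mH :: "'h \<Rightarrow> 'h \<Rightarrow> 'h" and uH :: 'h and al :: "'h \<Rightarrow> 'h"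
    and DH :: "'h \<Rightarrow> ('h \<times> 'h) list" and eH :: "'h \<Rightarrow> 'k"
    and sC :: "'k \<Rightarrow> 'c::ab_group_add \<Rightarrow> 'c"
    and mC :: "'c \<Rightarrow> 'c \<Rightarrow> 'c" and uC :: 'c and be :: "'c \<Rightarrow> 'c"
    and DC :: "'c \<Rightarrow> ('c \<times> 'c) list" and eC :: "'c \<Rightarrow> 'k"
    and act :: "'h \<Rightarrow> 'c \<Rightarrow> 'c" and rho :: "'c \<Rightarrow> ('h \<times> 'c) list"
    and sg sgi :: "'h \<Rightarrow> 'h \<Rightarrow> 'c"
    and m k :: int
  assumes H: "hom_bialgebra sH mH uH DH eH al"
    and C_alg: "hom_algebra sC mC uC be"
    and C_mod: "weak_hom_module_algebra sH DH eH sC mC uC act"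
    and C_comod: "hom_comodule_coalgebra sH mH uH DH eH al sC DC eC be rho"
    and sg_lin: "bilin sH sH sC sg" and sgi_lin: "bilin sH sH sC sgi"
    and sg_inv: "conv_inverse DH eH sC mC uC sg sgi"
    and X: "X_hom_bialgebra sC sH (multX mH DH al mC be act sg m k) (uC, uH)
              (copX mH DH al DC be rho m) (counitX eC eH) be al"
  shows "(\<forall>l g x. teq (tprod (lins sC) (lins sH))
            (phir mH DH al mC sg m k (phir mH DH al mC sg m k x l) (al g))
            (multX mH DH al mC be act sg m k (xiX be al x)
               (concat [phir mH DH al mC sg m k (sigbar uH al sg m k l1 g1) (mH l2 g2).
                          (l1, l2) \<leftarrow> DH l, (g1, g2) \<leftarrow> DH g])))
       \<and> (\<forall>x. teq (tprod (lins sC) (lins sH)) (phir mH DH al mC sg m k x uH) (xiX be al x))"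
proof -
  have "hom_crossed_product sH mH uH al DH eH sC mC uC be act sg m k"
    using H C_alg C_mod sg_lin X
    unfolding hom_crossed_product_def X_hom_bialgebra_def Let_def by blast
  then interpret hom_crossed_product sH mH uH al DH eH sC mC uC be act sg m k .
  show ?thesis using phir_right_hom_module by blast
qed

end
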